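(* Let $k=\mathbb F_{2^f}$ and let $\rho=(R,V,\beta,\Phi)$ be the form ring defined below. A code $C\le k^N$ is of Type $\rho$ if and only if $C$ is a generalized doubly-even self-dual code, i.e. $C$ is a $k$-linear subspace with $C=\{x\in k^N:\sum_i x_ic_i=0\ \forall c\in C\}$ and, for every $c\in C$, $\sum_{i=1}^N c_i=0$ and $\sum_{1\le i<j\le N}c_ic_j=0$.
   Context: $R=V=\mathbb F_{2^f}$ (so codes are $k$-linear subspaces of $k^N$). $\beta(x,y):=\tfrac12\mathrm{tr}(xy)\in\tfrac12\mathbb Z/\mathbb Z$, where $\mathrm{tr}$ is the trace $\mathbb F_{2^f}\to\mathbb F_2\cong\mathbb Z/2\mathbb Z$. Let $O=\mathbb Z_2[\zeta_{2^f-1}]$ be the ring of integers of the unramified extension of degree $f$ of $\mathbb Q_2$, so $R\cong O/2O$; for $x\in R$ the square $x^2$ of any lift of $x$ is well defined in $O/4O$, and the trace $\mathrm{Tr}:O\to\mathbb Z_2$ maps $4O$ into $4\mathbb Z_2$. For $a\in R$ let $\phi_a:V\to\tfrac14\mathbb Z/\mathbb Z$, $\phi_a(x):=\tfrac14\mathrm{Tr}(a^2x^2)$, and $\Phi=\{\phi_a:a\in R\}$. A code of Type $\rho$ is a subspace $C\le k^N$ that is self-dual, i.e. $C=\{x:\sum_i\beta(x_i,c_i)=0\ \forall c\in C\}$, and isotropic, i.e. $\sum_i\phi(c_i)=0$ in $\mathbb Q/\mathbb Z$ for all $c\in C$ and $\phi\in\Phi$. *)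

theory Defs
  imports Complex_Main "HOL-Library.Cardinality"
begin

text \<open>Ambient field k = F_(2^f): a finite field type 'a with CARD('a) = 2^f.
  Vectors of k^N are functions nat => 'a vanishing outside {0..<N}.\<close>

definition kN :: "nat \<Rightarrow> (nat \<Rightarrow> 'a::field) set" where
  "kN N = {x. \<forall>i\<ge>N. x i = 0}"

definition is_subspace :: "nat \<Rightarrow> (nat \<Rightarrow> 'a::field) set \<Rightarrow> bool" where
  "is_subspace N C \<longleftrightarrow> C \<subseteq> kN N \<and> (\<lambda>i. 0) \<in> C \<and>
     (\<forall>x\<in>C. \<forall>y\<in>C. (\<lambda>i. x i + y i) \<in> C) \<and>
     (\<forall>a. \<forall>x\<in>C. (\<lambda>i. a * x i) \<in> C)"

text \<open>Absolute trace tr : F_(2^f) -> F_2, tr x = sum of x^(2^i), i < f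
  (its value is 0 or 1 in the field).\<close>
definition fld_tr :: "nat \<Rightarrow> 'a::field \<Rightarrow> 'a" where
  "fld_tr f x = (\<Sum>i<f. x ^ (2 ^ i))"

definition bit_of :: "'a::field \<Rightarrow> int" where
  "bit_of z = (if z = 0 then 0 else 1)"

text \<open>beta(x,y) = 1/2 tr(xy), as a rational representative of an element of (1/2)Z/Z.\<close>
definition beta :: "nat \<Rightarrow> 'a::field \<Rightarrow> 'a \<Rightarrow> rat" where
  "beta f x y = of_int (bit_of (fld_tr f (x * y))) / 2"

text \<open>O/4O, O the ring of integers of the unramified degree f extension of Q_2,
  realised as the ring W_2(k) of 2-typical Witt vectors of length 2 over k
  (char k = 2): pairs (x0,x1) with the Witt vector operations.\<close>
definition wadd :: "'a::field \<times> 'a \<Rightarrow> 'a \<times> 'a \<Rightarrow> 'a \<times> 'a" where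
  "wadd u v = (fst u + fst v, snd u + snd v + fst u * fst v)"

definition wmul :: "'a::field \<times> 'a \<Rightarrow> 'a \<times> 'a \<Rightarrow> 'a \<times> 'a" where
  "wmul u v = (fst u * fst v, (fst u)^2 * snd v + (fst v)^2 * snd u)"

definition wfrob :: "'a::field \<times> 'a \<Rightarrow> 'a \<times> 'a" where
  "wfrob u = ((fst u)^2, (snd u)^2)"

text \<open>A lift of x in R = O/2O to O/4O (the Teichmueller lift).\<close>
definition wlift :: "'a::field \<Rightarrow> 'a \<times> 'a" where
  "wlift x = (x, 0)"

text \<open>Trace O/4O -> Z/4Z: sum of the Galois (Frobenius) conjugates; the result lies in
  W_2(F_2) = Z/4Z, identified via (b0,b1) |-> b0 + 2 b1.\<close>
fun wtr_aux :: "nat \<Rightarrow> 'a::field \<times> 'a \<Rightarrow> 'a \<times> 'a" where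
  "wtr_aux 0 w = (0, 0)"
| "wtr_aux (Suc n) w = wadd (wtr_aux n w) ((wfrob ^^ n) w)"

definition wtrace :: "nat \<Rightarrow> 'a::field \<times> 'a \<Rightarrow> int" where
  "wtrace f w = (let t = wtr_aux f w in bit_of (fst t) + 2 * bit_of (snd t))"

text \<open>phi_a(x) = 1/4 Tr(a^2 x^2), as a rational representative of an element of (1/4)Z/Z.\<close>
definition phi :: "nat \<Rightarrow> 'a::field \<Rightarrow> 'a \<Rightarrow> rat" where
  "phi f a x = of_int (wtrace f (wmul (wmul (wlift a) (wlift a)) (wmul (wlift x) (wlift x)))) / 4"

definition type_rho_code :: "nat \<Rightarrow> nat \<Rightarrow> (nat \<Rightarrow> 'a::field) set \<Rightarrow> bool" where
  "type_rho_code f N C \<longleftrightarrow> is_subspace N C \<and>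
     C = {x \<in> kN N. \<forall>c\<in>C. (\<Sum>i<N. beta f (x i) (c i)) \<in> \<int>} \<and>
     (\<forall>c\<in>C. \<forall>a. (\<Sum>i<N. phi f a (c i)) \<in> \<int>)"

definition gen_doubly_even_self_dual :: "nat \<Rightarrow> (nat \<Rightarrow> 'a::field) set \<Rightarrow> bool" where
  "gen_doubly_even_self_dual N C \<longleftrightarrow> is_subspace N C \<and>
     C = {x \<in> kN N. \<forall>c\<in>C. (\<Sum>i<N. x i * c i) = 0} \<and>
     (\<forall>c\<in>C. (\<Sum>i<N. c i) = 0 \<and> (\<Sum>j<N. \<Sum>i<j. c i * c j) = 0)"

end

theory Submission
  imports Defs "HOL-Computational_Algebra.Polynomial"
begin

text \<open>
  Since |k| = 2^f, k has characteristic 2, x^(2^f) = x, and the trace tr is additive,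
  takes values in F_2 = {0, 1} and is not identically zero (it is a polynomial function of
  degree 2^(f-1) < |k|).

  Self-duality: sum_i beta(x_i, c_i) = tr(x.c)/2 mod 1, so x is beta-orthogonal to C iff
  tr(x.c) = 0 for all c in C. As C is a k-subspace, replacing c by a multiple shows this
  is equivalent to x.c = 0 for all c in C. For c in a self-dual code,
  (sum_i c_i)^2 = sum_i c_i^2 = c.c = 0.

  Isotropy: model O/4O as the Witt vectors W_2(k), in which 4 phi_a(x) is the trace of the
  Teichmueller lift [y] = (y, 0) of y = (a x)^2. The Witt trace is additive and, being
  Frobenius-invariant, lands in W_2(F_2) = Z/4Z. Hence 4 sum_i phi_a(c_i) is the trace of
  the Witt sum of the [y_i], which is (sum_i y_i, e_2(y)) with e_2 the second elementary
  symmetric function. When sum_i c_i = 0 this equals (0, (a^2 e_2(c))^2), whose trace is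
  2 tr(a^2 e_2(c)). So c is isotropic for all phi_a iff tr(a^2 e_2(c)) = 0 for all a,
  iff e_2(c) = 0, because every element of k is a square.
\<close>

section \<open>Finite fields of characteristic 2\<close>

lemma two_le_card_field: "2 \<le> CARD('a::{field,finite})"
proof -
  have "card {0::'a, 1} \<le> CARD('a)" by (rule card_mono) auto
  then show ?thesis by simp
qed

lemma card_eq_power_2_imp_nonzero: "CARD('a::{field,finite}) = 2 ^ f \<Longrightarrow> f \<noteq> 0"
  using two_le_card_field[where 'a='a] by (cases f) auto

lemma finite_field_power_card: "(x::'a::{field,finite}) ^ CARD('a) = x"
proof (cases "x = 0")
  case False
  let ?U = "UNIV - {0::'a}"
  have "(\<Prod>y\<in>?U. x * y) = (\<Prod>y\<in>?U. y)"
    by (rule prod.reindex_bij_witness[of _ "\<lambda>y. y / x" "\<lambda>y. x * y"]) (use False in auto)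
  then have "x ^ card ?U = 1"
    by (simp add: prod.distrib)
  moreover have "CARD('a) = Suc (card ?U)"
    using two_le_card_field[where 'a='a] by (simp add: card_Diff_subset)
  ultimately show ?thesis by (metis mult.right_neutral power_Suc)
qed (use two_le_card_field[where 'a='a] in \<open>simp add: power_0_left\<close>)

lemma CHAR_eq_2_if_card_eq_power_2:
  assumes "CARD('a::{field,finite}) = 2 ^ f"
  shows "CHAR('a) = 2"
proof -
  have "f \<noteq> 0" using assms by (rule card_eq_power_2_imp_nonzero)
  then have "(-1::'a) ^ CARD('a) = 1" by (simp add: assms)
  then have "(-1::'a) = 1" by (simp add: finite_field_power_card)
  then have "of_nat 2 = (0::'a)" by (metis add.right_inverse of_nat_numeral one_add_one)
  then have "CHAR('a) dvd 2" by (rule of_nat_eq_0_iff_char_dvd[THEN iffD1])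
  moreover have "CHAR('a) \<noteq> 1" using of_nat_CHAR[where 'a='a] by auto
  ultimately show ?thesis
    using dvd_imp_le[of "CHAR('a)" 2] by (auto simp: le_Suc_eq numeral_2_eq_2)
qed

lemma exists_square_root:
  fixes t :: "'a::{field,finite}"
  assumes "CARD('a) = 2 ^ f"
  obtains a where "a ^ 2 = t"
proof -
  obtain g where f: "f = Suc g" using card_eq_power_2_imp_nonzero[OF assms] by (cases f) auto
  have "(t ^ 2 ^ g) ^ 2 = t ^ CARD('a)"
    by (simp add: assms f power_mult[symmetric] mult.commute)
  then show thesis using that by (simp add: finite_field_power_card)
qed

lemma power_two_power_add_CHAR_2:
  assumes "CHAR('a::comm_semiring_1) = 2"
  shows "(x + y) ^ 2 ^ n = x ^ 2 ^ n + (y::'a) ^ 2 ^ n"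
  using freshmans_dream'[of "2 ^ n" n x y] assms by simp

lemma power2_add_CHAR_2:
  assumes "CHAR('a::comm_semiring_1) = 2"
  shows "(x + y) ^ 2 = x ^ 2 + (y::'a) ^ 2"
  using assms by (simp add: freshmans_dream)

lemma power2_sum_CHAR_2:
  assumes "CHAR('a::comm_semiring_1) = 2"
  shows "(\<Sum>i\<in>A. g i) ^ 2 = (\<Sum>i\<in>A. (g i :: 'a) ^ 2)"
  using assms by (simp add: freshmans_dream_sum)

lemma one_add_one_CHAR_2: "CHAR('a::semiring_1) = 2 \<Longrightarrow> 1 + 1 = (0::'a)"
  by (metis of_nat_CHAR of_nat_numeral one_add_one)

lemma power2_eq_self_imp_zero_one: "(z::'a::idom) ^ 2 = z \<Longrightarrow> z \<in> {0, 1}"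
  by (auto simp: power2_eq_square)

lemma ex_fld_tr_nonzero:
  assumes "CARD('a::{field,finite}) = 2 ^ f"
  shows "\<exists>t::'a. fld_tr f t \<noteq> 0"
proof -
  obtain g where f: "f = Suc g" using card_eq_power_2_imp_nonzero[OF assms] by (cases f) auto
  define p :: "'a poly" where "p = (\<Sum>m<f. monom 1 (2 ^ m))"
  have poly_p: "poly p = fld_tr f"
    by (simp add: p_def fld_tr_def poly_sum poly_monom fun_eq_iff)
  have "coeff p (2 ^ g) = 1"
    by (simp add: p_def coeff_sum coeff_monom f)
  then have "p \<noteq> 0" by auto
  have "degree p \<le> 2 ^ g"
    unfolding p_def by (rule degree_sum_le) (auto simp: degree_monom_eq f)
  show ?thesis
  proof (rule ccontr)
    assume "\<nexists>t::'a. fld_tr f t \<noteq> 0"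
    then have "\<forall>t. poly p t = 0" by (simp add: poly_p)
    then have "CARD('a) \<le> degree p"
      using card_poly_roots_bound[OF \<open>p \<noteq> 0\<close>] by simp
    with \<open>degree p \<le> 2 ^ g\<close> have "CARD('a) \<le> 2 ^ g" by linarith
    then show False by (simp add: assms f)
  qed
qed

lemma fld_tr_zero [simp]: "fld_tr f 0 = 0"
  by (simp add: fld_tr_def power_0_left)

lemma fld_tr_add:
  assumes "CHAR('a::field) = 2"
  shows "fld_tr f (x + y) = fld_tr f x + fld_tr f (y :: 'a)"
  unfolding fld_tr_def power_two_power_add_CHAR_2[OF assms] by (rule sum.distrib)

lemma fld_tr_power2:
  assumes "CHAR('a::field) = 2"
  shows "fld_tr f (y ^ 2) = (fld_tr f (y :: 'a)) ^ 2"
  by (simp add: fld_tr_def power2_sum_CHAR_2[OF assms] power_mult[symmetric] mult.commute)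

definition esym2 :: "nat \<Rightarrow> (nat \<Rightarrow> 'a::comm_semiring_1) \<Rightarrow> 'a" where
  "esym2 N c = (\<Sum>j<N. \<Sum>i<j. c i * c j)"

lemma esym2_0 [simp]: "esym2 0 c = 0"
  by (simp add: esym2_def)

lemma esym2_Suc: "esym2 (Suc N) c = esym2 N c + (\<Sum>i<N. c i) * c N"
  by (simp add: esym2_def sum_distrib_right)

lemma esym2_scale: "esym2 N (\<lambda>i. a * c i) = a ^ 2 * esym2 N c"
  by (simp add: esym2_def sum_distrib_left power2_eq_square mult_ac)

lemma esym2_power2:
  assumes "CHAR('a::comm_semiring_1) = 2"
  shows "esym2 N (\<lambda>i. c i ^ 2) = (esym2 N c :: 'a) ^ 2"
  by (simp add: esym2_def power2_sum_CHAR_2[OF assms] power_mult_distrib)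

section \<open>Witt vectors of length two\<close>

lemma wadd_assoc: "wadd (wadd u v) w = wadd u (wadd v w)"
  by (simp add: wadd_def algebra_simps)

lemma wadd_commute: "wadd u v = wadd v u"
  by (simp add: wadd_def algebra_simps)

lemma wadd_left_commute: "wadd u (wadd v w) = wadd v (wadd u w)"
  by (simp add: wadd_def algebra_simps)

lemma wadd_zero_left [simp]: "wadd (0, 0) u = u"
  by (simp add: wadd_def)

lemma wadd_zero_right [simp]: "wadd u (0, 0) = u"
  by (simp add: wadd_def)

lemma wadd_right_cancel: "wadd u w = wadd v w \<Longrightarrow> u = v"
  by (auto simp: wadd_def prod_eq_iff)

lemma wfrob_wadd:
  assumes "CHAR('a::field) = 2"
  shows "wfrob (wadd u v) = wadd (wfrob u) (wfrob (v :: 'a \<times> 'a))"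
  by (simp add: wfrob_def wadd_def power2_add_CHAR_2[OF assms] power_mult_distrib)

lemma funpow_wfrob: "(wfrob ^^ n) u = (fst u ^ 2 ^ n, snd u ^ 2 ^ n)"
  by (induction n) (simp_all add: wfrob_def power_mult[symmetric] mult.commute)

lemma funpow_wfrob_wadd:
  assumes "CHAR('a::field) = 2"
  shows "(wfrob ^^ n) (wadd u v) = wadd ((wfrob ^^ n) u) ((wfrob ^^ n) (v :: 'a \<times> 'a))"
  by (induction n) (simp_all add: wfrob_wadd[OF assms])

lemma wtr_aux_wadd:
  assumes "CHAR('a::field) = 2"
  shows "wtr_aux n (wadd u v) = wadd (wtr_aux n u) (wtr_aux n (v :: 'a \<times> 'a))"
  by (induction n)
    (simp_all add: funpow_wfrob_wadd[OF assms] wadd_assoc wadd_commute wadd_left_commute)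

lemma wtr_aux_Suc_shift: "wtr_aux (Suc n) w = wadd w (wtr_aux n (wfrob w))"
  by (induction n) (simp_all add: wadd_assoc funpow_Suc_right del: funpow.simps)

lemma wfrob_wtr_aux:
  assumes "CHAR('a::field) = 2"
  shows "wfrob (wtr_aux n w) = wtr_aux n (wfrob (w :: 'a \<times> 'a))"
  by (induction n) (simp_all add: wfrob_wadd[OF assms] funpow_swap1 wfrob_def[of "(0, 0)"])

lemma wtr_aux_wfrob_eq:
  assumes "(wfrob ^^ n) w = w"
  shows "wtr_aux n (wfrob w) = wtr_aux n w"
proof (rule wadd_right_cancel)
  have "wadd (wtr_aux n (wfrob w)) w = wtr_aux (Suc n) w"
    by (simp only: wtr_aux_Suc_shift wadd_commute)
  also have "\<dots> = wadd (wtr_aux n w) w"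
    using assms by simp
  finally show "wadd (wtr_aux n (wfrob w)) w = wadd (wtr_aux n w) w" .
qed

lemma wtr_aux_mem_zero_one:
  assumes "CARD('a::{field,finite}) = 2 ^ f"
  shows "wtr_aux f (w :: 'a \<times> 'a) \<in> {0, 1} \<times> {0, 1}"
proof -
  have "(wfrob ^^ f) w = w"
    using finite_field_power_card[where 'a='a] by (simp add: funpow_wfrob assms)
  then have "wfrob (wtr_aux f w) = wtr_aux f w"
    by (simp add: wfrob_wtr_aux[OF CHAR_eq_2_if_card_eq_power_2[OF assms]] wtr_aux_wfrob_eq)
  then have "fst (wtr_aux f w) ^ 2 = fst (wtr_aux f w)"
    and "snd (wtr_aux f w) ^ 2 = snd (wtr_aux f w)"
    by (simp_all add: wfrob_def prod_eq_iff)
  then show ?thesis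
    by (metis mem_Times_iff power2_eq_self_imp_zero_one)
qed

lemma fst_wtr_aux: "fst (wtr_aux n w) = fld_tr n (fst w)"
  by (induction n) (simp_all add: wadd_def funpow_wfrob fld_tr_def)

lemma wtr_aux_zero_fst: "wtr_aux n (0, z) = (0, fld_tr n z)"
  by (induction n) (simp_all add: wadd_def funpow_wfrob fld_tr_def)

lemma fld_tr_mem_zero_one:
  assumes "CARD('a::{field,finite}) = 2 ^ f"
  shows "fld_tr f (y :: 'a) \<in> {0, 1}"
  using wtr_aux_mem_zero_one[OF assms, of "(y, 0)"] fst_wtr_aux[of f "(y, 0)"]
  by (metis fst_conv mem_Times_iff)

lemma fld_tr_power2_eq:
  assumes "CARD('a::{field,finite}) = 2 ^ f"
  shows "fld_tr f (y ^ 2) = fld_tr f (y :: 'a)"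
  using fld_tr_mem_zero_one[OF assms, of y]
  by (auto simp: fld_tr_power2[OF CHAR_eq_2_if_card_eq_power_2[OF assms]])

lemma bit_of_eq_0_iff [simp]: "bit_of z = 0 \<longleftrightarrow> z = 0"
  by (simp add: bit_of_def)

definition witt_int :: "'a::field \<times> 'a \<Rightarrow> int" where
  "witt_int t = bit_of (fst t) + 2 * bit_of (snd t)"

lemma wtrace_eq_witt_int: "wtrace f w = witt_int (wtr_aux f w)"
  by (simp add: wtrace_def witt_int_def Let_def)

lemma witt_int_wadd:
  assumes "CHAR('a::field) = 2" and "p \<in> {0, 1} \<times> {0, 1}" and "q \<in> {0, 1} \<times> {0, 1}"
  shows "witt_int (wadd p q) = (witt_int p + witt_int (q :: 'a \<times> 'a)) mod 4"
  using one_add_one_CHAR_2[OF assms(1)] assms(2,3) by (auto simp: witt_int_def wadd_def bit_of_def)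

lemma bit_of_add:
  assumes "CHAR('a::field) = 2" and "x \<in> {0, 1}" and "y \<in> {0, 1}"
  shows "bit_of (x + y) = (bit_of x + bit_of (y :: 'a)) mod 2"
  using one_add_one_CHAR_2[OF assms(1)] assms(2,3) by (auto simp: bit_of_def)

lemma wtrace_wadd:
  assumes "CARD('a::{field,finite}) = 2 ^ f"
  shows "wtrace f (wadd u v) = (wtrace f u + wtrace f (v :: 'a \<times> 'a)) mod 4"
  using witt_int_wadd[OF CHAR_eq_2_if_card_eq_power_2[OF assms]
      wtr_aux_mem_zero_one[OF assms] wtr_aux_mem_zero_one[OF assms]]
  by (simp add: wtrace_eq_witt_int wtr_aux_wadd[OF CHAR_eq_2_if_card_eq_power_2[OF assms]])

lemma wtrace_zero_fst: "wtrace f (0, z) = 2 * bit_of (fld_tr f z)"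
  by (simp add: wtrace_eq_witt_int wtr_aux_zero_fst witt_int_def bit_of_def)

lemma wtrace_sum_wlift:
  fixes y :: "nat \<Rightarrow> 'a::{field,finite}"
  assumes "CARD('a) = 2 ^ f"
  shows "(\<Sum>i<N. wtrace f (wlift (y i))) mod 4 = wtrace f (\<Sum>i<N. y i, esym2 N y)"
proof (induction N)
  case 0
  show ?case by (simp add: wtrace_zero_fst bit_of_def)
next
  case (Suc N)
  have "(\<Sum>i<Suc N. wtrace f (wlift (y i))) mod 4
      = ((\<Sum>i<N. wtrace f (wlift (y i))) mod 4 + wtrace f (wlift (y N))) mod 4"
    by (simp add: mod_add_left_eq)
  also have "\<dots> = wtrace f (wadd (\<Sum>i<N. y i, esym2 N y) (wlift (y N)))"
    by (simp add: Suc.IH wtrace_wadd[OF assms])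
  also have "wadd (\<Sum>i<N. y i, esym2 N y) (wlift (y N)) = (\<Sum>i<Suc N. y i, esym2 (Suc N) y)"
    by (simp add: wadd_def wlift_def esym2_Suc)
  finally show ?case .
qed

section \<open>The forms beta and phi\<close>

lemma sum_bit_of_fld_tr:
  fixes z :: "nat \<Rightarrow> 'a::{field,finite}"
  assumes "CARD('a) = 2 ^ f"
  shows "(\<Sum>i<N. bit_of (fld_tr f (z i))) mod 2 = bit_of (fld_tr f (\<Sum>i<N. z i))"
proof (induction N)
  case 0
  show ?case by (simp add: bit_of_def)
next
  case (Suc N)
  have char2: "CHAR('a) = 2"
    using assms by (rule CHAR_eq_2_if_card_eq_power_2)
  have "(\<Sum>i<Suc N. bit_of (fld_tr f (z i))) mod 2
      = ((\<Sum>i<N. bit_of (fld_tr f (z i))) mod 2 + bit_of (fld_tr f (z N))) mod 2"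
    by (simp add: mod_add_left_eq)
  also have "\<dots> = bit_of (fld_tr f (\<Sum>i<N. z i) + fld_tr f (z N))"
    using bit_of_add[OF char2 fld_tr_mem_zero_one[OF assms] fld_tr_mem_zero_one[OF assms]]
    by (simp add: Suc.IH)
  also have "\<dots> = bit_of (fld_tr f (\<Sum>i<Suc N. z i))"
    by (simp add: fld_tr_add[OF char2])
  finally show ?case .
qed

lemma phi_eq_wtrace: "phi f a x = of_int (wtrace f (wlift ((a * x) ^ 2))) / 4"
  by (simp add: phi_def wmul_def wlift_def power2_eq_square mult_ac)

lemma beta_sum_in_Ints_iff:
  fixes x c :: "nat \<Rightarrow> 'a::{field,finite}"
  assumes "CARD('a) = 2 ^ f"
  shows "(\<Sum>i<N. beta f (x i) (c i)) \<in> \<int> \<longleftrightarrow> fld_tr f (\<Sum>i<N. x i * c i) = 0"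
proof -
  have sum_beta: "(\<Sum>i<N. beta f (x i) (c i))
      = of_int (\<Sum>i<N. bit_of (fld_tr f (x i * c i))) / of_int 2"
    by (simp add: beta_def sum_divide_distrib)
  have "(\<Sum>i<N. beta f (x i) (c i)) \<in> \<int>
      \<longleftrightarrow> (\<Sum>i<N. bit_of (fld_tr f (x i * c i))) mod 2 = 0"
    unfolding sum_beta of_int_div_of_int_in_Ints_iff by (simp add: dvd_eq_mod_eq_0)
  also have "\<dots> \<longleftrightarrow> fld_tr f (\<Sum>i<N. x i * c i) = 0"
    by (simp add: sum_bit_of_fld_tr[OF assms])
  finally show ?thesis .
qed

lemma phi_sum_in_Ints_iff:
  assumes card: "CARD('a::{field,finite}) = 2 ^ f" and sum_c: "(\<Sum>i<N. c i) = (0::'a)"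
  shows "(\<Sum>i<N. phi f a (c i)) \<in> \<int> \<longleftrightarrow> fld_tr f (a ^ 2 * esym2 N c) = 0"
proof -
  have char2: "CHAR('a) = 2"
    using card by (rule CHAR_eq_2_if_card_eq_power_2)
  define y where "y i = (a * c i) ^ 2" for i
  have "(\<Sum>i<N. y i) = (a * (\<Sum>i<N. c i)) ^ 2"
    by (simp add: y_def sum_distrib_left power2_sum_CHAR_2[OF char2])
  then have sum_y: "(\<Sum>i<N. y i) = 0"
    by (simp add: sum_c)
  have esym2_y: "esym2 N y = (a ^ 2 * esym2 N c) ^ 2"
    unfolding y_def[abs_def] by (simp add: esym2_power2[OF char2] esym2_scale)
  have sum_phi: "(\<Sum>i<N. phi f a (c i)) = of_int (\<Sum>i<N. wtrace f (wlift (y i))) / of_int 4"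
    by (simp add: phi_eq_wtrace y_def sum_divide_distrib)
  have "(\<Sum>i<N. phi f a (c i)) \<in> \<int> \<longleftrightarrow> (\<Sum>i<N. wtrace f (wlift (y i))) mod 4 = 0"
    unfolding sum_phi of_int_div_of_int_in_Ints_iff by (simp add: dvd_eq_mod_eq_0)
  also have "\<dots> \<longleftrightarrow> wtrace f (0, (a ^ 2 * esym2 N c) ^ 2) = 0"
    by (simp add: wtrace_sum_wlift[OF card] sum_y esym2_y)
  also have "\<dots> \<longleftrightarrow> fld_tr f (a ^ 2 * esym2 N c) = 0"
    by (simp add: wtrace_zero_fst fld_tr_power2_eq[OF card])
  finally show ?thesis .
qed

lemma fld_tr_mult_squares_eq_0_iff:
  assumes "CARD('a::{field,finite}) = 2 ^ f"
  shows "(\<forall>a. fld_tr f (a ^ 2 * z) = 0) \<longleftrightarrow> z = (0::'a)"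
proof
  assume all: "\<forall>a. fld_tr f (a ^ 2 * z) = 0"
  show "z = 0"
  proof (rule ccontr)
    assume "z \<noteq> 0"
    obtain t :: 'a where "fld_tr f t \<noteq> 0"
      using ex_fld_tr_nonzero[OF assms] by blast
    moreover obtain a where "a ^ 2 = t / z"
      using exists_square_root[OF assms] by blast
    ultimately show False
      using all \<open>z \<noteq> 0\<close> by (metis nonzero_eq_divide_eq)
  qed
qed simp

lemma orthogonal_iff_functional_orthogonal:
  fixes T :: "'a::field \<Rightarrow> 'b::zero"
  assumes "is_subspace N C" and "T 0 = 0" and "T t \<noteq> 0"
  shows "(\<forall>c\<in>C. T (\<Sum>i<N. x i * c i) = 0) \<longleftrightarrow> (\<forall>c\<in>C. (\<Sum>i<N. x i * c i) = 0)"
proof (intro iffI ballI)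
  fix c
  assume T_orth: "\<forall>c\<in>C. T (\<Sum>i<N. x i * c i) = 0" and "c \<in> C"
  define s where "s = (\<Sum>i<N. x i * c i)"
  show "s = 0"
  proof (rule ccontr)
    assume "s \<noteq> 0"
    have "(\<lambda>i. t / s * c i) \<in> C"
      using assms(1) \<open>c \<in> C\<close> unfolding is_subspace_def by blast
    moreover have "(\<Sum>i<N. x i * (t / s * c i)) = t / s * s"
      unfolding s_def sum_distrib_left by (simp add: mult.left_commute)
    ultimately show False
      using T_orth assms(3) \<open>s \<noteq> 0\<close> by fastforce
  qed
qed (simp add: assms(2))

lemma sum_eq_0_if_self_orthogonal:
  assumes "CHAR('a::field) = 2" and "(\<Sum>i<N. c i * c i) = (0::'a)"
  shows "(\<Sum>i<N. c i) = 0"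
proof -
  have "(\<Sum>i<N. c i) ^ 2 = (\<Sum>i<N. c i ^ 2)"
    by (rule power2_sum_CHAR_2[OF assms(1)])
  also have "\<dots> = 0"
    using assms(2) by (simp add: power2_eq_square)
  finally show ?thesis by simp
qed

theorem mainTheorem4:
  fixes f N :: nat and C :: "(nat \<Rightarrow> 'a::{field,finite}) set"
  assumes "CARD('a) = 2 ^ f"
  shows "type_rho_code f N C \<longleftrightarrow> gen_doubly_even_self_dual N C"
proof -
  obtain t :: 'a where t: "fld_tr f t \<noteq> 0"
    using ex_fld_tr_nonzero[OF assms] by blast
  have same_dual: "{x \<in> kN N. \<forall>c\<in>C. (\<Sum>i<N. beta f (x i) (c i)) \<in> \<int>}
      = {x \<in> kN N. \<forall>c\<in>C. (\<Sum>i<N. x i * c i) = 0}" if "is_subspace N C"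
    using beta_sum_in_Ints_iff[OF assms]
      orthogonal_iff_functional_orthogonal[where T="fld_tr f", OF that fld_tr_zero t] by simp
  have same_isotropy: "(\<forall>c\<in>C. \<forall>a. (\<Sum>i<N. phi f a (c i)) \<in> \<int>)
      \<longleftrightarrow> (\<forall>c\<in>C. (\<Sum>i<N. c i) = 0 \<and> esym2 N c = 0)"
    if self_dual: "C = {x \<in> kN N. \<forall>c\<in>C. (\<Sum>i<N. x i * c i) = 0}"
  proof -
    have "(\<Sum>i<N. c i) = 0" if "c \<in> C" for c
      using sum_eq_0_if_self_orthogonal[OF CHAR_eq_2_if_card_eq_power_2[OF assms]] self_dual that
      by blast
    then show ?thesis
      using phi_sum_in_Ints_iff[OF assms] fld_tr_mult_squares_eq_0_iff[OF assms] by simp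
  qed
  show ?thesis
    unfolding type_rho_code_def gen_doubly_even_self_dual_def esym2_def[symmetric]
    using same_dual same_isotropy by blast
qed

end
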